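(* For every integer $N\geq 1$: (i) for every integer $s\geq 0$, \[\sum_{\lambda\leq N}\frac{\rho_{4^s}(\lambda)}{\lambda}<\frac{3}{\pi^2}\log^2 N+2.774\log N+2.166;\] (ii) \[\sum_{n=1}^{N}\tau(n^2-1)<N\Big(\frac{6}{\pi^2}\log^2N+5.548\log N+4.332\Big).\]
   Context: For integers $k\geq 0$, $d\geq 1$, $\rho_k(d):=\#\{0\leq x<d:\ x^2\equiv k\pmod d\}$. $\tau(m)$ is the number of positive divisors of $m$, with the convention $\tau(0)=0$ (the $n=1$ term contributes nothing). *)

theory Defs
  imports Complex_Main
begin

definition rho :: "nat \<Rightarrow> nat \<Rightarrow> nat" where
  "rho k d = card {x. x < d \<and> x ^ 2 mod d = k mod d}"

definition tau :: "nat \<Rightarrow> nat" where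
  "tau m = (if m = 0 then 0 else card {d. d dvd m})"

end

theory Submission
  imports Defs "HOL-Analysis.Gamma_Function" "HOL-Computational_Algebra.Squarefree"
begin

text \<open>
  For odd d and c coprime to d, a root of x^2 \<equiv> c^2 (mod d) is determined by the set of primes
  of d dividing x + c, so \<rho>_{4^s}(d) is at most the number of squarefree divisors of d, while the
  power of 2 in d costs at most a factor 2 per factor 4 of d (a factor 4 when s = 0). Splitting
  \<lambda> \<le> y by its 2-adic valuation reduces both sums to V(y) = \<Sum>_{odd m \<le> y} 2^\<omega>(m)/m, which
  equals \<Sum>_{odd f \<le> y} P(y/f)/f with P(t) the sum of 1/e over odd squarefree e \<le> t. Writing each
  odd n as e d^2 gives \<Sum>_{odd n \<le> t} 1/n = \<Sum>_{odd d \<le> \<surd>t} P(t/d^2)/d^2, and as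
  \<Sum>_{odd d} 1/d^2 = \<pi>^2/8, induction on t yields (4/\<pi>^2) log t \<le> P(t) \<le> (4/\<pi>^2) log t + 1 + 4/\<pi>^2.
  Hence V(y) is quadratic in log y, and the constants follow by explicit numerical estimates.
  For (ii), \<tau>(n^2 - 1) is at most twice the number of its divisors below n; exchanging the
  sums counts the n \<le> N with n^2 \<equiv> 1 (mod d) by \<rho>_1(d) \<lfloor>N/d\<rfloor>, giving N times the sum in (i)
  for s = 0.
\<close>

section \<open>Square roots modulo \<open>d\<close>\<close>

lemma rho_le_modulus: "rho k d \<le> d"
proof -
  have "rho k d \<le> card {..<d}" unfolding rho_def by (intro card_mono) auto
  then show ?thesis by simp
qed

lemma eq_if_int_dvd_diff_less:
  fixes m x y :: nat
  assumes "int m dvd int x - int y" "x < m" "y < m"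
  shows "x = y"
proof -
  from assms(1) obtain k where k: "int x - int y = int m * k" by (auto elim: dvdE)
  show ?thesis
  proof (rule ccontr)
    assume "x \<noteq> y"
    then have "k \<noteq> 0" using k by auto
    then have "int m * 1 \<le> int m * \<bar>k\<bar>" by (intro mult_left_mono) auto
    then have "\<bar>int m * k\<bar> \<ge> int m" by (simp add: abs_mult)
    then show False using k assms by linarith
  qed
qed

lemma rho_mult_coprime_le:
  fixes a b k :: nat
  assumes a: "a > 0" and b: "b > 0" and cop: "coprime a b"
  shows "rho k (a * b) \<le> rho k a * rho k b"
proof -
  define S where "S d = {x. x < d \<and> x ^ 2 mod d = k mod d}" for d
  have root_mod: "(x mod d)^2 mod d = k mod d"
    if "x^2 mod (a*b) = k mod (a*b)" "d dvd a * b" for x d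
  proof -
    have "(x mod d)^2 mod d = (x^2 mod (a*b)) mod d" by (simp add: power_mod mod_mod_cancel that(2))
    also have "\<dots> = k mod d" by (simp add: that mod_mod_cancel)
    finally show ?thesis .
  qed
  have im: "(\<lambda>x. (x mod a, x mod b)) ` S (a*b) \<subseteq> S a \<times> S b"
    using a b root_mod by (auto simp: S_def)
  have inj: "inj_on (\<lambda>x. (x mod a, x mod b)) (S (a*b))"
  proof (rule inj_onI)
    fix x y assume x: "x \<in> S (a*b)" and y: "y \<in> S (a*b)"
      and eq: "(x mod a, x mod b) = (y mod a, y mod b)"
    have "int x mod int a = int y mod int a" "int x mod int b = int y mod int b"
      using eq by (metis of_nat_mod prod.inject)+
    then have "int a dvd int x - int y" "int b dvd int x - int y" by (simp_all add: mod_eq_dvd_iff)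
    then have "int (a*b) dvd int x - int y" using cop by (simp add: divides_mult)
    then show "x = y" using x y eq_if_int_dvd_diff_less[of "a*b" x y] by (simp add: S_def)
  qed
  have "card (S (a*b)) \<le> card (S a \<times> S b)" using card_inj_on_le[OF inj im] by (simp add: S_def)
  then show ?thesis by (simp add: rho_def S_def card_cartesian_product)
qed

lemma rho_two_le: "rho k 2 \<le> 1"
proof -
  have "x^2 mod 2 = x" if "x < 2" for x :: nat using that by (cases x) (auto simp: power2_eq_square)
  then have "{x::nat. x < 2 \<and> x ^ 2 mod 2 = k mod 2} \<subseteq> {k mod 2}" by auto
  then have "rho k 2 \<le> card {k mod 2}" unfolding rho_def by (intro card_mono) auto
  then show ?thesis by simp
qed

lemma rho_1_4: "rho 1 4 \<le> 2"
proof -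
  have "{x::nat. x < 4 \<and> x ^ 2 mod 4 = 1 mod 4} \<subseteq> {1, 3}"
  proof
    fix x :: nat assume "x \<in> {x::nat. x < 4 \<and> x ^ 2 mod 4 = 1 mod 4}"
    then have "x = 0 \<or> x = 1 \<or> x = 2 \<or> x = 3" "x^2 mod 4 = 1" by auto
    then show "x \<in> {1,3}" by auto
  qed
  then have "rho 1 4 \<le> card {1::nat, 3}" unfolding rho_def by (intro card_mono) auto
  then show ?thesis by simp
qed

text \<open>A root of \<open>x\<^sup>2 \<equiv> 4k (mod 4m)\<close> is \<open>x = 2y\<close> with \<open>y\<close> a root mod \<open>m\<close> lifted to \<open>y < 2m\<close>.\<close>
lemma rho_mult_4_le:
  fixes k m :: nat
  assumes m: "m > 0"
  shows "rho (4 * k) (4 * m) \<le> 2 * rho k m"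
proof -
  define S where "S = {x. x < 4*m \<and> x ^ 2 mod (4*m) = (4*k) mod (4*m)}"
  define R where "R = {y. y < m \<and> y ^ 2 mod m = k mod m}"
  define f where "f x = ((x div 2) mod m, (x div 2) div m)" for x :: nat
  have half: "\<exists>y. x = 2*y \<and> y < 2*m \<and> y^2 mod m = k mod m" if "x \<in> S" for x
  proof -
    have x: "x < 4*m" "x ^ 2 mod (4*m) = (4*k) mod (4*m)" using that by (auto simp: S_def)
    then have "x^2 mod 4 = 0" by (metis mod_mod_cancel dvd_triv_left mod_mult_self1_is_0)
    then have "even (x^2)" by (metis dvd_trans dvd_eq_mod_eq_0 even_numeral)
    then obtain y where y: "x = 2*y" by auto
    have "4 * (y^2 mod m) = 4 * (k mod m)"
      using x(2) by (simp add: y power_mult_distrib flip: mult_mod_right)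
    then show ?thesis using x(1) y by auto
  qed
  have im: "f ` S \<subseteq> R \<times> {0, 1}"
  proof
    fix z assume "z \<in> f ` S"
    then obtain x y where z: "z = f x" and y: "x = 2*y" "y < 2*m" "y^2 mod m = k mod m"
      using half by blast
    have "(y mod m)^2 mod m = k mod m" using y(3) by (simp add: power_mod)
    moreover have "y div m < 2" using y(2) m by (simp add: div_less_iff_less_mult)
    ultimately show "z \<in> R \<times> {0,1}" using z y m by (auto simp: f_def R_def)
  qed
  have inj: "inj_on f S"
  proof (rule inj_onI)
    fix x x' assume x: "x \<in> S" and x': "x' \<in> S" and eq: "f x = f x'"
    obtain y y' where y: "x = 2*y" "x' = 2*y'" using half[OF x] half[OF x'] by blast
    have "y mod m = y' mod m" "y div m = y' div m" using eq y by (auto simp: f_def)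
    then show "x = x'" using y by (metis div_mult_mod_eq)
  qed
  have "card S \<le> card (R \<times> {0::nat,1})" using card_inj_on_le[OF inj im] by (simp add: R_def)
  also have "\<dots> = 2 * card R" by (simp add: card_cartesian_product)
  finally show ?thesis by (simp add: rho_def S_def R_def)
qed

text \<open>Write \<open>x = 2u + 1\<close>: then \<open>2\<^sup>b\<^sup>+\<^sup>1\<close> divides \<open>u (u + 1)\<close>, hence divides \<open>u\<close> or \<open>u + 1\<close>.\<close>
lemma sq_root_of_1_mod_8_pow2:
  fixes x b :: nat
  defines "q \<equiv> 2^b"
  assumes xl: "x < 8*q" and xc: "x^2 mod (8*q) = 1"
  shows "x \<in> {1, 4*q+1, 4*q-1, 8*q-1}"
proof -
  have q2: "2*q = 2^Suc b" and q0: "q > 0" by (simp_all add: q_def)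
  have "x^2 mod 2 = (x^2 mod (8*q)) mod 2" by (simp add: mod_mod_cancel)
  then have "x^2 mod 2 = 1" using xc by simp
  then have "odd (x^2)" by (simp only: odd_iff_mod_2_eq_one)
  then have "odd x" by simp
  then obtain u where u: "x = 2*u + 1" by (metis oddE)
  have "x^2 = (8*q) * (x^2 div (8*q)) + 1" using xc by (metis div_mult_mod_eq mult.commute)
  moreover have "x^2 = 4 * (u * (u+1)) + 1" using u by (simp add: power2_eq_square algebra_simps)
  ultimately have qd: "(2*q) dvd u * (u+1)" by (intro dvdI[of _ _ "x^2 div (8*q)"]) simp
  show ?thesis
  proof (cases "even u")
    case True
    then have "coprime (2*q) (u+1)" unfolding q2 by (simp add: coprime_power_left_iff)
    then obtain r where "u = 2*q * r" using qd coprime_dvd_mult_left_iff by blast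
    then have xr: "x = 4*q*r + 1" using u by simp
    then have "4*q*r < 4*q*2" using xl by linarith
    then have "r < 2" using q0 by simp
    then have "r = 0 \<or> r = 1" by presburger
    then show ?thesis using xr by auto
  next
    case False
    then have "coprime (2*q) u" unfolding q2 by (simp add: coprime_power_left_iff)
    then obtain r where "u + 1 = 2*q * r" using qd coprime_dvd_mult_right_iff by blast
    then have xr: "x + 1 = 4*q*r" using u by simp
    then have "4*q*r \<le> 4*q*2" using xl by linarith
    then have "r \<le> 2" using q0 by simp
    moreover have "r \<noteq> 0" using xr by (metis add_is_0 mult_0_right zero_neq_one)
    ultimately have "r = 1 \<or> r = 2" by presburger
    then show ?thesis using xr by auto
  qed
qed

lemma rho_1_pow2_le: "rho 1 (2^a) \<le> 4"
proof (cases "a \<le> 2")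
  case True
  have "rho 1 (2^a) \<le> 2^a" by (rule rho_le_modulus)
  also have "(2::nat)^a \<le> 2^2" using True by (intro power_increasing) auto
  finally show ?thesis by simp
next
  case False
  define q where "q = (2::nat)^(a-3)"
  have a3: "a = (a - 3) + 3" using False by simp
  have "(2::nat)^a = 8*q" unfolding q_def by (subst a3) (simp add: power_add)
  then have "{x. x < 2^a \<and> x ^ 2 mod 2^a = 1 mod 2^a} \<subseteq> {1, 4*q+1, 4*q-1, 8*q-1}"
    using sq_root_of_1_mod_8_pow2[of _ "a-3"] by (auto simp: q_def)
  then have "rho 1 (2^a) \<le> card {1, 4*q+1, 4*q-1, 8*q-1}" unfolding rho_def by (intro card_mono) auto
  also have "\<dots> \<le> 4" by (intro order.trans[OF card_insert_le_m1]) auto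
  finally show ?thesis .
qed

definition sqf_divisor_count :: "nat \<Rightarrow> nat" where
  "sqf_divisor_count m = card {e. e dvd m \<and> squarefree e}"

lemma int_dvd_if_prime_powers_dvd:
  fixes m :: nat and z :: int
  assumes m: "m > 0"
    and H: "\<And>p. prime p \<Longrightarrow> p dvd m \<Longrightarrow> int p ^ multiplicity p m dvd z"
  shows "int m dvd z"
proof (cases "z = 0")
  case False
  have "m dvd nat \<bar>z\<bar>"
  proof (rule multiplicity_le_imp_dvd)
    show "m \<noteq> 0" using m by simp
    fix p :: nat assume p: "prime p"
    show "multiplicity p m \<le> multiplicity p (nat \<bar>z\<bar>)"
    proof (cases "p dvd m")
      case True
      have "int (p ^ multiplicity p m) dvd int (nat \<bar>z\<bar>)" using H[OF p True] by simp
      then have "p ^ multiplicity p m dvd nat \<bar>z\<bar>" by (simp only: int_dvd_int_iff)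
      then show ?thesis using False p by (intro multiplicity_geI) auto
    qed (simp add: not_dvd_imp_multiplicity_0)
  qed
  then have "int m dvd int (nat \<bar>z\<bar>)" by (simp only: int_dvd_int_iff)
  then show ?thesis by simp
qed simp

lemma prod_primes_dvd:
  fixes A :: "nat set"
  assumes "finite A" "\<And>p. p \<in> A \<Longrightarrow> prime p" "\<And>p. p \<in> A \<Longrightarrow> p dvd m"
  shows "\<Prod>A dvd m"
  using assms
proof (induction A rule: finite_induct)
  case (insert p A)
  have "coprime p (\<Prod>A)"
    using insert by (intro prod_coprime_right) (auto intro!: primes_coprime)
  then show ?case using insert by (simp add: divides_mult)
qed simp

lemma squarefree_prod_primes:
  fixes A :: "nat set"
  assumes "finite A" "\<And>p. p \<in> A \<Longrightarrow> prime p"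
  shows "squarefree (\<Prod>A)"
  using assms by (intro squarefree_prod_coprime) (auto intro: primes_coprime squarefree_prime)

lemma prime_factors_prod_primes:
  fixes A :: "nat set"
  assumes "finite A" "\<And>p. p \<in> A \<Longrightarrow> prime p"
  shows "prime_factors (\<Prod>A) = A"
proof -
  have "0 \<notin> id ` A" using assms(2) not_prime_0 by force
  then have "prime_factors (prod id A) = \<Union>((prime_factors \<circ> id) ` A)"
    using assms by (intro prime_factors_prod) auto
  also have "\<dots> = A" using assms by (auto simp: prime_prime_factors)
  finally show ?thesis by simp
qed

lemma prime_power_dvd_sq_root_factor:
  fixes m x c p :: nat
  assumes "odd m" "coprime c m" "prime p" "p dvd m"
    and root: "x^2 mod m = c^2 mod m"
  shows "if p dvd x + c then int p ^ multiplicity p m dvd int x + int c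
         else int p ^ multiplicity p m dvd int x - int c"
proof -
  have "int (x^2) mod int m = int (c^2) mod int m" using root by (metis of_nat_mod)
  then have "int m dvd int (x^2) - int (c^2)" by (simp add: mod_eq_dvd_iff)
  moreover have "int (x^2) - int (c^2) = (int x - int c) * (int x + int c)"
    by (simp add: algebra_simps power2_eq_square)
  moreover have "int p ^ multiplicity p m dvd int m"
    by (metis int_dvd_int_iff multiplicity_dvd of_nat_power)
  ultimately have pm: "int p ^ multiplicity p m dvd (int x - int c) * (int x + int c)"
    by (metis dvd_trans)
  have "\<not> p dvd 2 * c"
  proof
    assume "p dvd 2 * c"
    then have "p dvd 2 \<or> p dvd c" using assms(3) prime_dvd_mult_nat by blast
    moreover have "\<not> p dvd 2"
      using assms(1,4) primes_dvd_imp_eq[OF assms(3) two_is_prime_nat] by auto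
    moreover have "\<not> p dvd c"
    proof
      assume "p dvd c"
      then have "is_unit p" using assms(2,4) by (meson coprime_common_divisor)
      then show False using assms(3) by simp
    qed
    ultimately show False by blast
  qed
  have not_both: "\<not> (int p dvd int x + int c \<and> int p dvd int x - int c)"
  proof
    assume "int p dvd int x + int c \<and> int p dvd int x - int c"
    then have "int p dvd (int x + int c) - (int x - int c)" by (blast intro: dvd_diff)
    then have "int p dvd int (2 * c)" by simp
    then show False using \<open>\<not> p dvd 2 * c\<close> by (simp only: int_dvd_int_iff)
  qed
  have iff: "int p dvd int x + int c \<longleftrightarrow> p dvd x + c" by (metis of_nat_add int_dvd_int_iff)
  have ip: "prime (int p)" using assms(3) by simp
  show ?thesis
  proof (cases "p dvd x + c")
    case True
    then have "coprime (int p) (int x - int c)" using not_both iff ip by (simp add: prime_imp_coprime)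
    then have "coprime (int p ^ multiplicity p m) (int x - int c)" by simp
    then have "int p ^ multiplicity p m dvd int x + int c" using pm coprime_dvd_mult_right_iff by blast
    then show ?thesis using True by simp
  next
    case False
    then have "coprime (int p) (int x + int c)" using iff ip by (simp add: prime_imp_coprime)
    then have "coprime (int p ^ multiplicity p m) (int x + int c)" by simp
    then have "int p ^ multiplicity p m dvd int x - int c" using pm coprime_dvd_mult_left_iff by blast
    then show ?thesis using False by simp
  qed
qed

lemma sq_roots_eq_if_same_prime_divisors:
  fixes m x y c :: nat
  assumes "odd m" "coprime c m" "x < m" "y < m"
    and "x^2 mod m = c^2 mod m" "y^2 mod m = c^2 mod m"
    and same: "\<And>p. prime p \<Longrightarrow> p dvd m \<Longrightarrow> p dvd x + c \<longleftrightarrow> p dvd y + c"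
  shows "x = y"
proof -
  have "int m dvd int x - int y"
  proof (rule int_dvd_if_prime_powers_dvd)
    show "m > 0" using \<open>odd m\<close> by (simp add: odd_pos)
    fix p :: nat assume p: "prime p" "p dvd m"
    note rx = prime_power_dvd_sq_root_factor[OF assms(1,2) p assms(5)]
     and ry = prime_power_dvd_sq_root_factor[OF assms(1,2) p assms(6)]
    let ?q = "int p ^ multiplicity p m"
    show "?q dvd int x - int y"
    proof (cases "p dvd x + c")
      case True
      then have "?q dvd int x + int c" "?q dvd int y + int c" using rx ry same[OF p] by simp_all
      from dvd_diff[OF this] show ?thesis by simp
    next
      case False
      then have "?q dvd int x - int c" "?q dvd int y - int c" using rx ry same[OF p] by simp_all
      from dvd_diff[OF this] show ?thesis by simp
    qed
  qed
  then show ?thesis using assms(3,4) by (rule eq_if_int_dvd_diff_less)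
qed

text \<open>A root \<open>x\<close> is recorded by the squarefree divisor of \<open>m\<close> made of the primes dividing \<open>x + c\<close>.\<close>
lemma rho_sq_le_sqf_divisor_count:
  fixes c m :: nat
  assumes "odd m" "coprime c m"
  shows "rho (c^2) m \<le> sqf_divisor_count m"
proof -
  have m0: "m > 0" using assms(1) by (simp add: odd_pos)
  define S where "S = {x. x < m \<and> x^2 mod m = c^2 mod m}"
  define T where "T x = {p. prime p \<and> p dvd m \<and> p dvd x + c}" for x
  define E where "E = {e. e dvd m \<and> squarefree e}"
  have finT: "finite (T x)" for x
    by (rule finite_subset[of _ "{..m}"]) (auto simp: T_def m0 dvd_imp_le)
  have Tprime: "p \<in> T x \<Longrightarrow> prime p" for p x by (simp add: T_def)
  have finE: "finite E"
    by (rule finite_subset[of _ "{..m}"]) (auto simp: E_def m0 dvd_imp_le)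
  have im: "(\<lambda>x. \<Prod>(T x)) ` S \<subseteq> E"
  proof
    fix e assume "e \<in> (\<lambda>x. \<Prod>(T x)) ` S"
    then obtain x where e: "e = \<Prod>(T x)" by blast
    have "\<Prod>(T x) dvd m" using finT by (rule prod_primes_dvd) (auto simp: T_def)
    moreover have "squarefree (\<Prod>(T x))" using finT Tprime by (rule squarefree_prod_primes)
    ultimately show "e \<in> E" using e by (simp add: E_def)
  qed
  have inj: "inj_on (\<lambda>x. \<Prod>(T x)) S"
  proof (rule inj_onI)
    fix x y assume x: "x \<in> S" and y: "y \<in> S" and eq: "\<Prod>(T x) = \<Prod>(T y)"
    have "prime_factors (\<Prod>(T z)) = T z" for z using finT Tprime by (rule prime_factors_prod_primes)
    then have "T x = T y" using eq by metis
    then have same: "p dvd x + c \<longleftrightarrow> p dvd y + c" if "prime p" "p dvd m" for p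
      using that unfolding T_def by blast
    have "x < m" "y < m" "x^2 mod m = c^2 mod m" "y^2 mod m = c^2 mod m"
      using x y by (simp_all add: S_def)
    from sq_roots_eq_if_same_prime_divisors[OF assms this same] show "x = y" .
  qed
  have "card S \<le> card E" by (rule card_inj_on_le[OF inj im finE])
  then show ?thesis unfolding rho_def sqf_divisor_count_def S_def E_def by simp
qed

lemma rho_pow4_odd_le:
  assumes "odd d"
  shows "rho (4^s) d \<le> sqf_divisor_count d"
proof -
  have "((2::nat)^s)^2 = (2^2)^s" by (simp only: power_mult[symmetric] mult.commute)
  then show ?thesis using rho_sq_le_sqf_divisor_count[of d "2^s"] assms by simp
qed

lemma rho_pow4_double_odd_le:
  assumes "odd m"
  shows "rho (4^s) (2*m) \<le> sqf_divisor_count m"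
proof -
  have "rho (4^s) (2*m) \<le> rho (4^s) 2 * rho (4^s) m"
    using assms by (intro rho_mult_coprime_le) (auto simp: odd_pos)
  also have "\<dots> \<le> rho (4^s) m" using rho_two_le[of "4^s"] by simp
  also have "\<dots> \<le> sqf_divisor_count m" using rho_pow4_odd_le[OF assms] .
  finally show ?thesis .
qed

lemma rho_1_4_odd_le:
  assumes "odd m"
  shows "rho 1 (4*m) \<le> 2 * sqf_divisor_count m"
proof -
  have "coprime (4::nat) m" using coprime_mult_left_iff[of 2 2 m] assms by simp
  then have "rho 1 (4*m) \<le> rho 1 4 * rho 1 m" using assms by (intro rho_mult_coprime_le) (auto simp: odd_pos)
  also have "\<dots> \<le> 2 * rho 1 m" using rho_1_4 by (intro mult_right_mono) auto
  also have "\<dots> \<le> 2 * sqf_divisor_count m" using rho_pow4_odd_le[OF assms, of 0] by simp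
  finally show ?thesis .
qed

fun odd_part :: "nat \<Rightarrow> nat" where
  "odd_part n = (if n \<noteq> 0 \<and> even n then odd_part (n div 2) else n)"

declare odd_part.simps [simp del]

lemma odd_part_odd [simp]: "odd n \<Longrightarrow> odd_part n = n"
  by (subst odd_part.simps) auto

lemma odd_part_double [simp]: "n > 0 \<Longrightarrow> odd_part (2 * n) = odd_part n"
  by (subst odd_part.simps) simp

lemma rho_1_pow2_mult_le:
  assumes "k > 0"
  shows "rho 1 (2^a * k) \<le> 4 * sqf_divisor_count (odd_part k)"
  using assms
proof (induction k arbitrary: a rule: less_induct)
  case (less k)
  show ?case
  proof (cases "even k")
    case True
    then obtain j where j: "k = 2*j" "0 < j" using less.prems by auto
    have "rho 1 (2^a * k) = rho 1 (2^Suc a * j)" by (simp add: j ac_simps)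
    also have "\<dots> \<le> 4 * sqf_divisor_count (odd_part j)" using j by (intro less.IH) auto
    finally show ?thesis using j by simp
  next
    case False
    have "rho 1 (2^a * k) \<le> rho 1 (2^a) * rho 1 k" using False by (intro rho_mult_coprime_le) (auto simp: odd_pos)
    also have "\<dots> \<le> 4 * rho 1 k" using rho_1_pow2_le by (intro mult_right_mono) auto
    also have "\<dots> \<le> 4 * sqf_divisor_count k" using rho_pow4_odd_le[OF False, of 0] by simp
    finally show ?thesis using False by simp
  qed
qed

section \<open>Sums over odd numbers\<close>

lemma ln_diff_le: "0 < a \<Longrightarrow> 0 < b \<Longrightarrow> ln a - ln b \<le> (a - b) / (b::real)"
  using ln_le_minus_one[of "a/b"] by (simp add: ln_div diff_divide_distrib)

lemma ln3_le: "ln (3::real) \<le> 6/5"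
proof -
  have "(3::real) \<le> (1 + (6/5) / real 10) ^ 10" by (simp add: power_divide)
  also have "\<dots> \<le> exp (6/5)" by (rule exp_ge_one_plus_x_over_n_power_n) auto
  finally have "ln 3 \<le> ln (exp (6/5::real))" by (subst ln_le_cancel_iff) auto
  then show ?thesis by simp
qed

lemma sum_odd_inverse_bounds:
  fixes K :: nat
  assumes "K \<ge> 1"
  shows "ln (2*real K+1)/2 + 2/5 \<le> (\<Sum>k<K. 1 / (2*real k+1))"
    and "(\<Sum>k<K. 1 / (2*real k+1)) \<le> ln (2*real K-1)/2 + 1"
proof -
  have "ln (2*real K+1)/2 + 2/5 \<le> (\<Sum>k<K. 1 / (2*real k+1))
    \<and> (\<Sum>k<K. 1 / (2*real k+1)) \<le> ln (2*real K-1)/2 + 1"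
    using assms
  proof (induction K rule: dec_induct)
    case base
    show ?case using ln3_le by simp
  next
    case (step K)
    have "ln (2*real K+3) - ln (2*real K+1) \<le> 2/(2*real K+1)"
      using ln_diff_le[of "2*real K+3" "2*real K+1"] by simp
    moreover have "ln (2*real K-1) - ln (2*real K+1) \<le> -2/(2*real K+1)"
      using ln_diff_le[of "2*real K-1" "2*real K+1"] step(1) by simp
    ultimately show ?case using step.IH by (simp add: algebra_simps)
  qed
  then show "ln (2*real K+1)/2 + 2/5 \<le> (\<Sum>k<K. 1 / (2*real k+1))"
    and "(\<Sum>k<K. 1 / (2*real k+1)) \<le> ln (2*real K-1)/2 + 1" by simp_all
qed

lemma sums_odd_inverse_squares: "(\<lambda>k. 1 / (2*real k+1)^2) sums (pi^2/8)"
proof -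
  have b: "(\<lambda>n. 1 / real ((n + 1)^2)) sums (pi^2 / 6)" by (rule inverse_squares_sums)
  have "(\<lambda>n. \<Sum>i\<in>{n*2..<n*2+2}. 1 / real ((i + 1)^2)) sums (pi^2 / 6)"
    by (rule sums_group[OF b]) simp
  moreover have "(\<lambda>n. \<Sum>i\<in>{n*2..<n*2+2}. 1 / real ((i + 1)^2))
    = (\<lambda>n. 1/(2*real n+1)^2 + 1/(4 * real ((n+1)^2)))"
  proof
    fix n :: nat
    have "{n*2..<n*2+2} = {2*n, 2*n+1}" by auto
    then show "(\<Sum>i\<in>{n*2..<n*2+2}. 1 / real ((i + 1)^2)) = 1/(2*real n+1)^2 + 1/(4 * real ((n+1)^2))"
      by (simp add: power2_eq_square algebra_simps)
  qed
  ultimately have "(\<lambda>n. 1/(2*real n+1)^2 + 1/(4 * real ((n+1)^2))) sums (pi^2 / 6)" by simp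
  from sums_diff[OF this sums_mult[OF b, of "1/4"]] show ?thesis by simp
qed

lemma sum_odd_inverse_squares_le: "(\<Sum>k<K. 1 / (2*real k+1)^2) \<le> pi^2/8"
  using sum_le_suminf[OF sums_summable[OF sums_odd_inverse_squares], of "{..<K}"]
    sums_unique[OF sums_odd_inverse_squares] by simp

text \<open>Telescoping with \<open>1/(2j+1)\<^sup>2 \<le> 1/(4j) - 1/(4(j+1))\<close>.\<close>
lemma sum_odd_inverse_squares_extend_le:
  assumes "K \<ge> 1"
  shows "(\<Sum>k<K+m. 1 / (2*real k+1)^2) \<le> (\<Sum>k<K. 1 / (2*real k+1)^2) + 1/(4*K) - 1/(4*(K+m))"
proof (induction m)
  case (Suc m)
  define j where "j = real (K + m)"
  have j1: "j \<ge> 1" using assms by (simp add: j_def)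
  have "4*j*(j+1) \<le> (2*j+1)^2" by (simp add: power2_eq_square algebra_simps)
  moreover have "0 < 4*j*(j+1)" using j1 by simp
  ultimately have "1 / (2*j+1)^2 \<le> 1/(4*j*(j+1))" by (intro frac_le) auto
  also have "\<dots> = 1/(4*j) - 1/(4*(j+1))" using j1 by (simp add: field_simps)
  finally show ?case using Suc by (simp add: j_def algebra_simps)
qed simp

lemma sum_odd_inverse_squares_ge:
  assumes "K \<ge> 1"
  shows "pi^2/8 - 1/(4*K) \<le> (\<Sum>k<K. 1 / (2*real k+1)^2)"
proof -
  define c where "c = (\<Sum>k<K. 1 / (2*real k+1)^2) + 1/(4*K)"
  have "(\<Sum>k<n. 1 / (2*real k+1)^2) \<le> c" for n
  proof -
    have "(\<Sum>k<n. 1 / (2*real k+1)^2) \<le> (\<Sum>k<K+n. 1 / (2*real k+1)^2)"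
      by (intro sum_mono2) auto
    also have "\<dots> \<le> c - 1/(4*(K+n))"
      using sum_odd_inverse_squares_extend_le[OF assms, of n] by (simp add: c_def)
    also have "\<dots> \<le> c" by simp
    finally show ?thesis .
  qed
  then have "suminf (\<lambda>k. 1 / (2*real k+1)^2) \<le> c"
    by (intro suminf_le_const sums_summable[OF sums_odd_inverse_squares])
  then show ?thesis using sums_unique[OF sums_odd_inverse_squares] by (simp add: c_def)
qed

lemma ln_over_sq_antimono:
  fixes x y :: real
  assumes "3 \<le> x" "x \<le> y"
  shows "ln y / y^2 \<le> ln x / x^2"
proof -
  have "exp 1 \<le> x" using exp_le assms by linarith
  then have "ln y / y \<le> ln x / x" using assms(2) by (rule ln_x_over_x_mono)
  moreover have "1 / y \<le> 1 / x" using assms by (intro divide_left_mono) auto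
  ultimately have "(ln y / y) * (1/y) \<le> (ln x / x) * (1/x)"
    using assms by (intro mult_mono) auto
  then show ?thesis by (simp add: power2_eq_square)
qed

text \<open>\<open>(ln u + 1)/u = \<integral>\<^sub>u\<^sup>\<infinity> ln v / v\<^sup>2 dv\<close>, halved because consecutive odd numbers are 2 apart.\<close>
definition ln_over_sq_tail :: "real \<Rightarrow> real" where
  "ln_over_sq_tail u = (ln u + 1) / (2*u)"

lemma ln_over_sq_tail_step:
  fixes a :: real
  assumes "a = 1 \<or> a \<ge> 3"
  shows "ln (a+2) / (a+2)^2 \<le> ln_over_sq_tail a - ln_over_sq_tail (a+2)"
proof (cases "a \<ge> 3")
  case True
  have "(ln_over_sq_tail has_real_derivative (- ln u / (2*u^2))) (at u)" if "u > 0" for u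
    unfolding ln_over_sq_tail_def using that
    by (auto intro!: derivative_eq_intros simp: field_simps power2_eq_square)
  then obtain z where z: "a < z" "z < a+2"
    "ln_over_sq_tail (a+2) - ln_over_sq_tail a = (a + 2 - a) * (- ln z / (2*z^2))"
    using MVT2[of a "a+2" ln_over_sq_tail "\<lambda>u. - ln u / (2*u^2)"] True by force
  moreover have "ln (a+2) / (a+2)^2 \<le> ln z / z^2"
    using z True by (intro ln_over_sq_antimono) auto
  ultimately show ?thesis by simp
next
  case False
  then have "a = 1" using assms by simp
  moreover have "ln 3 / 9 \<le> 1/2 - (ln 3 + 1) / (6::real)" using ln3_le by (simp add: field_simps)
  ultimately show ?thesis by (simp add: ln_over_sq_tail_def)
qed

lemma sum_ln_over_odd_squares_le:
  fixes K :: nat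
  assumes "K \<ge> 1"
  shows "(\<Sum>k\<in>{1..<K}. ln (2*real k+1) / (2*real k+1)^2) \<le> 1/2 - ln_over_sq_tail (2*real K - 1)"
  using assms
proof (induction K rule: dec_induct)
  case base then show ?case by (simp add: ln_over_sq_tail_def)
next
  case (step K)
  have "2*real K - 1 = 1 \<or> 2*real K - 1 \<ge> 3" using step(1) by (cases "K = 1") auto
  from ln_over_sq_tail_step[OF this]
  have "ln (2*real K+1) / (2*real K+1)^2
    \<le> ln_over_sq_tail (2*real K - 1) - ln_over_sq_tail (2*real K + 1)"
    by (simp add: algebra_simps)
  moreover have "2 * real (Suc K) - 1 = 2*real K + 1" by simp
  ultimately show ?case using step.IH step(1) by (simp add: algebra_simps)
qed

lemma ln_sq_step_le:
  fixes a :: real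
  assumes "a \<ge> 3"
  shows "((ln (a+2))^2 - (ln a)^2)/4 \<le> ln a / a"
proof -
  have "((\<lambda>u. (ln u)^2/4) has_real_derivative (ln u / (2*u))) (at u)" if "u > 0" for u
    using that by (auto intro!: derivative_eq_intros simp: field_simps power2_eq_square)
  then obtain z where z: "a < z" "z < a+2" "(ln (a+2))^2/4 - (ln a)^2/4 = (a + 2 - a) * (ln z / (2*z))"
    using MVT2[of a "a+2" "\<lambda>u. (ln u)^2/4" "\<lambda>u. ln u / (2*u)"] assms by force
  have "exp 1 \<le> a" using exp_le assms by linarith
  then have "ln z / z \<le> ln a / a" using z by (intro ln_x_over_x_mono) auto
  then show ?thesis using z(3) by (simp add: field_simps)
qed

lemma sum_ln_over_odd_ge:
  fixes K :: nat
  assumes "K \<ge> 1"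
  shows "((ln (2*real K+1))^2 - (ln 3)^2)/4 \<le> (\<Sum>k<K. ln (2*real k+1) / (2*real k+1))"
  using assms
proof (induction K rule: dec_induct)
  case (step K)
  have "((ln (2*real K+3))^2 - (ln (2*real K+1))^2)/4 \<le> ln (2*real K+1) / (2*real K+1)"
    using ln_sq_step_le[of "2*real K+1"] step(1) by (simp add: algebra_simps)
  then show ?case using step.IH by (simp add: algebra_simps)
qed simp

lemma ln_succ_odd_over_le:
  fixes K :: nat
  assumes "K \<ge> 1"
  shows "ln (2*real K+1) / (2*real K) \<le> 2 * ln_over_sq_tail (2*real K - 1)"
proof -
  have K1: "real K \<ge> 1" using assms by simp
  have "ln (2*real K+1) - ln (2*real K-1) \<le> 2/(2*real K-1)"
    using ln_diff_le[of "2*real K+1" "2*real K-1"] K1 by simp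
  then have "ln (2*real K+1) / (2*real K) \<le> (ln (2*real K-1) + 2/(2*real K-1)) / (2*real K)"
    using K1 by (intro divide_right_mono) auto
  also have "\<dots> = ln (2*real K-1) / (2*real K) + (1/real K) / (2*real K-1)"
    using K1 by (simp add: field_simps)
  also have "ln (2*real K-1) / (2*real K) \<le> ln (2*real K-1) / (2*real K-1)"
    using K1 by (intro divide_left_mono) auto
  also have "(1/real K) / (2*real K-1) \<le> 1 / (2*real K-1)"
    using K1 by (intro divide_right_mono) auto
  also have "ln (2*real K-1) / (2*real K-1) + 1 / (2*real K-1) = 2 * ln_over_sq_tail (2*real K - 1)"
  proof -
    have "2*real K - 1 \<noteq> 0" using K1 by simp
    then show ?thesis unfolding ln_over_sq_tail_def by (simp add: field_simps)
  qed
  finally show ?thesis by simp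
qed

lemma pi_sq_bounds: "98596/10000 \<le> pi^2" "pi^2 \<le> 99225/10000"
proof -
  have p: "314/100 \<le> pi" "pi \<le> 315/100" using pi_approx by simp_all
  have "(314/100) * (314/100) \<le> pi * pi" using p by (intro mult_mono) auto
  then show "98596/10000 \<le> pi^2" by (simp add: power2_eq_square)
  have "pi * pi \<le> (315/100) * (315/100)" using p by (intro mult_mono) auto
  then show "pi^2 \<le> 99225/10000" by (simp add: power2_eq_square)
qed

lemma inverse_pi_sq_bounds: "1007/10000 \<le> 1/pi^2" "1/pi^2 \<le> 1015/10000"
proof -
  have "(1007/10000::real) \<le> 1/(99225/10000)" by simp
  also have "\<dots> \<le> 1/pi^2" using pi_sq_bounds by (intro divide_left_mono) auto
  finally show "1007/10000 \<le> 1/pi^2" .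
  have "1/pi^2 \<le> 1/(98596/10000)" using pi_sq_bounds by (intro divide_left_mono) auto
  also have "\<dots> \<le> (1015/10000::real)" by simp
  finally show "1/pi^2 \<le> 1015/10000" .
qed

lemma halving_induct [consumes 1, case_names step]:
  fixes t :: real
  assumes "1 \<le> t"
    and step: "\<And>t. 1 \<le> t \<Longrightarrow> (\<And>u. 1 \<le> u \<Longrightarrow> u \<le> t / 2 \<Longrightarrow> P u) \<Longrightarrow> P t"
  shows "P t"
  using assms(1)
proof (induction "nat \<lfloor>t\<rfloor>" arbitrary: t rule: less_induct)
  case less
  show ?case
  proof (rule step[OF less.prems])
    fix u assume u: "1 \<le> u" "u \<le> t / 2"
    then have "\<lfloor>u\<rfloor> < \<lfloor>t\<rfloor>" "0 \<le> \<lfloor>u\<rfloor>" by linarith+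
    then have "nat \<lfloor>u\<rfloor> < nat \<lfloor>t\<rfloor>" by linarith
    then show "P u" using less.hyps u(1) by blast
  qed
qed

definition odds_upto :: "real \<Rightarrow> nat set" where
  "odds_upto y = {f. odd f \<and> real f \<le> y}"

definition odd_sqfs_upto :: "real \<Rightarrow> nat set" where
  "odd_sqfs_upto y = {e. odd e \<and> squarefree e \<and> real e \<le> y}"

definition odd_harmonic :: "real \<Rightarrow> real" where
  "odd_harmonic y = (\<Sum>f\<in>odds_upto y. 1 / real f)"

definition odd_sqf_harmonic :: "real \<Rightarrow> real" where
  "odd_sqf_harmonic y = (\<Sum>e\<in>odd_sqfs_upto y. 1 / real e)"

lemma finite_odds_upto [simp]: "finite (odds_upto y)"
  by (rule finite_subset[of _ "{..nat \<lfloor>y\<rfloor>}"]) (auto simp: odds_upto_def intro: le_nat_floor)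

lemma finite_odd_sqfs_upto [simp]: "finite (odd_sqfs_upto y)"
  by (rule finite_subset[of _ "{..nat \<lfloor>y\<rfloor>}"]) (auto simp: odd_sqfs_upto_def intro: le_nat_floor)

lemma odds_upto_empty: "y < 1 \<Longrightarrow> odds_upto y = {}"
  by (auto simp: odds_upto_def elim!: oddE)

lemma odds_upto_mono: "y \<le> z \<Longrightarrow> odds_upto y \<subseteq> odds_upto z"
  by (auto simp: odds_upto_def)

lemma odds_upto_eq_image:
  assumes "y \<ge> 1"
  obtains K :: nat where "K \<ge> 1" "odds_upto y = (\<lambda>k. 2*k+1) ` {..<K}"
    "2*real K - 1 \<le> y" "y < 2*real K + 1"
proof -
  define K where "K = nat \<lfloor>(y+1)/2\<rfloor>"
  have RK: "real K = of_int \<lfloor>(y+1)/2\<rfloor>" using assms by (simp add: K_def)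
  have fl: "real K \<le> (y+1)/2" "(y+1)/2 < real K + 1" unfolding RK by linarith+
  have "real K > 0" using fl assms by (simp add: field_simps)
  moreover have "odds_upto y = (\<lambda>k. 2*k+1) ` {..<K}"
  proof (intro set_eqI iffI)
    fix f assume "f \<in> odds_upto y"
    then obtain k where "f = 2*k+1" "real k + 1 \<le> (y+1)/2" by (auto simp: odds_upto_def elim!: oddE)
    moreover from this have "k < K" using fl by linarith
    ultimately show "f \<in> (\<lambda>k. 2*k+1) ` {..<K}" by auto
  next
    fix f assume "f \<in> (\<lambda>k. 2*k+1) ` {..<K}"
    then obtain k where k: "f = 2*k+1" "k < K" by auto
    then have "real k + 1 \<le> real K" by linarith
    then show "f \<in> odds_upto y" using k fl by (simp add: odds_upto_def)
  qed
  moreover have "2*real K - 1 \<le> y" "y < 2*real K + 1" using fl by (simp_all add: field_simps)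
  ultimately show ?thesis using that by simp
qed

lemma sum_odds_upto:
  assumes "odds_upto y = (\<lambda>k. 2*k+1) ` {..<K}"
  shows "(\<Sum>f\<in>odds_upto y. g (real f)) = (\<Sum>k<K. g (2*real k+1))"
  unfolding assms by (subst sum.reindex) (auto simp: inj_on_def add.commute)

lemma odd_harmonic_bounds:
  assumes "y \<ge> 1"
  shows "ln y / 2 + 2/5 \<le> odd_harmonic y" "odd_harmonic y \<le> ln y / 2 + 1"
proof -
  obtain K where K: "K \<ge> 1" "odds_upto y = (\<lambda>k. 2*k+1) ` {..<K}" "2*real K - 1 \<le> y" "y < 2*real K + 1"
    using odds_upto_eq_image[OF assms] .
  have O: "odd_harmonic y = (\<Sum>k<K. 1 / (2*real k+1))"
    unfolding odd_harmonic_def using sum_odds_upto[OF K(2), of "\<lambda>x. 1/x"] by simp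
  have "0 < 2*real K - 1" using K(1) by simp
  then have "ln (2*real K-1) \<le> ln y" using K(3) by (subst ln_le_cancel_iff) auto
  moreover have "ln y \<le> ln (2*real K+1)" using K(4) assms by simp
  ultimately
  show "ln y / 2 + 2/5 \<le> odd_harmonic y" "odd_harmonic y \<le> ln y / 2 + 1"
    using sum_odd_inverse_bounds[OF K(1)] O by linarith+
qed

lemma sum_ln_over_odds_upto_ge:
  assumes "y \<ge> 1"
  shows "((ln y)^2 - 36/25)/4 \<le> (\<Sum>f\<in>odds_upto y. ln (real f) / real f)"
proof -
  obtain K where K: "K \<ge> 1" "odds_upto y = (\<lambda>k. 2*k+1) ` {..<K}" "2*real K - 1 \<le> y" "y < 2*real K + 1"
    using odds_upto_eq_image[OF assms] .
  have "ln y \<le> ln (2*real K+1)" using K(4) assms by (subst ln_le_cancel_iff) auto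
  then have "(ln y)^2 \<le> (ln (2*real K+1))^2" using assms by (intro power_mono) auto
  moreover have "(ln 3)^2 \<le> (6/5::real)^2" by (rule power_mono[OF ln3_le]) simp
  ultimately have "((ln y)^2 - 36/25)/4 \<le> ((ln (2*real K+1))^2 - (ln 3)^2)/4"
    by (simp add: power_divide)
  also have "\<dots> \<le> (\<Sum>k<K. ln (2*real k+1) / (2*real k+1))" by (rule sum_ln_over_odd_ge[OF K(1)])
  also have "\<dots> = (\<Sum>f\<in>odds_upto y. ln (real f) / real f)"
    using sum_odds_upto[OF K(2), of "\<lambda>x. ln x / x"] by simp
  finally show ?thesis .
qed

section \<open>Odd squarefree numbers\<close>

lemma squarefree_square_decomp_unique:
  fixes n d e :: nat
  assumes d: "d > 0" and e: "squarefree e" and n: "n = e * d^2"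
  shows "square_part n = d" "squarefree_part n = e"
proof -
  have e0: "e \<noteq> 0" using e by (metis not_squarefree_0)
  have n0: "n \<noteq> 0" using e0 d n by simp
  have mult: "multiplicity p n = multiplicity p e + 2 * multiplicity p d" if p: "prime p" for p
    using n e0 d p by (simp add: prime_elem_multiplicity_mult_distrib prime_elem_multiplicity_power_distrib)
  have le1: "multiplicity p e \<le> 1" if "prime p" for p
    using e e0 that squarefree_factorial_semiring'' by blast
  show "square_part n = d"
  proof (rule multiplicity_eq_nat)
    fix p :: nat assume p: "prime p"
    show "multiplicity p (square_part n) = multiplicity p d"
      using mult[OF p] le1[OF p] by (simp add: prime_multiplicity_square_part[OF p])
  qed (use n0 d in \<open>auto intro: Nat.gr0I\<close>)
  show "squarefree_part n = e"
  proof (rule multiplicity_eq_nat)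
    fix p :: nat assume p: "prime p"
    show "multiplicity p (squarefree_part n) = multiplicity p e"
      using mult[OF p] le1[OF p] by (simp add: prime_multiplicity_squarefree_part[OF p])
  qed (use e0 squarefree_part_nonzero[of n] in \<open>auto intro: Nat.gr0I\<close>)
qed

text \<open>Every odd \<open>n \<le> t\<close> is uniquely \<open>e d\<^sup>2\<close> with \<open>e\<close> odd and squarefree and \<open>d\<close> odd.\<close>
lemma odd_harmonic_eq_sum_odd_squares:
  assumes t: "t \<ge> 0"
  shows "odd_harmonic t = (\<Sum>d\<in>odds_upto (sqrt t). odd_sqf_harmonic (t / (real d)^2) / (real d)^2)"
proof -
  define D where "D = odds_upto (sqrt t)"
  define S where "S = Sigma D (\<lambda>d. odd_sqfs_upto (t / (real d)^2))"
  have "(\<Sum>d\<in>D. odd_sqf_harmonic (t / (real d)^2) / (real d)^2)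
        = (\<Sum>d\<in>D. \<Sum>e\<in>odd_sqfs_upto (t / (real d)^2). 1 / (real e * (real d)^2))"
    unfolding odd_sqf_harmonic_def by (simp add: sum_divide_distrib)
  also have "\<dots> = (\<Sum>(d, e)\<in>S. 1 / (real e * (real d)^2))"
    unfolding S_def by (rule sum.Sigma) (auto simp: D_def)
  also have "\<dots> = (\<Sum>n\<in>odds_upto t. 1 / real n)"
  proof (rule sum.reindex_bij_witness[where i = "\<lambda>n. (square_part n, squarefree_part n)"
        and j = "\<lambda>(d, e). e * d^2"])
    fix p assume "p \<in> S"
    then obtain d e where pe: "p = (d, e)" and d: "odd d" "real d \<le> sqrt t"
      and e: "odd e" "squarefree e" "real e \<le> t / (real d)^2"
      by (auto simp: S_def D_def odds_upto_def odd_sqfs_upto_def)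
    have d0: "d > 0" using d by (simp add: odd_pos)
    show "(square_part ((\<lambda>(d, e). e * d^2) p), squarefree_part ((\<lambda>(d, e). e * d^2) p)) = p"
      using squarefree_square_decomp_unique[OF d0 e(2) refl] pe by simp
    have "real e * (real d)^2 \<le> t" using e(3) d0 by (simp add: field_simps)
    then show "(\<lambda>(d, e). e * d^2) p \<in> odds_upto t" using pe d e by (simp add: odds_upto_def)
    show "1 / real ((\<lambda>(d, e). e * d^2) p) = (\<lambda>(d, e). 1 / (real e * (real d)^2)) p"
      using pe by simp
  next
    fix n assume "n \<in> odds_upto t"
    then have n: "odd n" "real n \<le> t" by (auto simp: odds_upto_def)
    have dec: "n = squarefree_part n * (square_part n)^2" by (rule squarefree_decompose)
    then show "(\<lambda>(d, e). e * d^2) (square_part n, squarefree_part n) = n" by simp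
    have sp0: "square_part n > 0" using n(1) by (auto intro: Nat.gr0I)
    have "odd (square_part n)" "odd (squarefree_part n)"
      using n(1) by (subst (asm) dec, simp add: even_mult_iff)+
    moreover have rn: "real n = real (squarefree_part n) * (real (square_part n))^2"
      using dec by (metis of_nat_mult of_nat_power)
    have "square_part n ^ 2 \<le> n" using dec n(1) by (metis dvd_imp_le dvd_triv_right odd_pos)
    then have "(real (square_part n))^2 \<le> t" using n(2) by (metis of_nat_le_iff of_nat_power order.trans)
    then have "real (square_part n) \<le> sqrt t" by (simp add: real_le_rsqrt)
    moreover have "real (squarefree_part n) \<le> t / (real (square_part n))^2"
      using rn n sp0 by (subst pos_le_divide_eq) (auto simp: odd_pos)
    ultimately show "(square_part n, squarefree_part n) \<in> S"
      by (simp add: S_def D_def odds_upto_def odd_sqfs_upto_def squarefree_squarefree_part)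
  qed
  finally show ?thesis by (simp add: odd_harmonic_def D_def)
qed

lemma odd_harmonic_split:
  assumes "t \<ge> 1" "K \<ge> 1" "odds_upto (sqrt t) = (\<lambda>k. 2*k+1) ` {..<K}"
  shows "odd_harmonic t = odd_sqf_harmonic t
    + (\<Sum>k\<in>{1..<K}. odd_sqf_harmonic (t / (2*real k+1)^2) / (2*real k+1)^2)"
proof -
  have "odd_harmonic t = (\<Sum>k<K. odd_sqf_harmonic (t / (2*real k+1)^2) / (2*real k+1)^2)"
    using odd_harmonic_eq_sum_odd_squares[of t] sum_odds_upto[OF assms(3)] assms(1) by simp
  also have "\<dots> = odd_sqf_harmonic t
    + (\<Sum>k\<in>{1..<K}. odd_sqf_harmonic (t / (2*real k+1)^2) / (2*real k+1)^2)"
  proof -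
    have "{..<K} = insert 0 {1..<K}" using assms(2) by auto
    then show ?thesis by simp
  qed
  finally show ?thesis .
qed

lemma div_odd_square_bounds:
  assumes "t \<ge> 1" "2*real K - 1 \<le> sqrt t" "k \<in> {1..<K}"
  shows "1 \<le> t / (2*real k+1)^2" "t / (2*real k+1)^2 \<le> t / 9"
    and "ln (t / (2*real k+1)^2) = ln t - 2 * ln (2*real k+1)"
proof -
  have d: "3 \<le> 2*real k+1" "2*real k+1 \<le> sqrt t" using assms(2,3) by auto
  have "(3::real)^2 \<le> (2*real k+1)^2" using d(1) by (intro power_mono) auto
  moreover have "(2*real k+1)^2 \<le> (sqrt t)^2" using d by (intro power_mono) auto
  ultimately have "9 \<le> (2*real k+1)^2" "(2*real k+1)^2 \<le> t" using assms(1) by simp_all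
  then show "1 \<le> t / (2*real k+1)^2" "t / (2*real k+1)^2 \<le> t / 9"
    using assms(1) by (simp, intro divide_left_mono) auto
  show "ln (t / (2*real k+1)^2) = ln t - 2 * ln (2*real k+1)"
    using assms(1) by (simp add: ln_div ln_realpow)
qed

lemma odd_sqf_harmonic_upper_step:
  assumes t: "t \<ge> 1"
    and lower: "\<And>u. 1 \<le> u \<Longrightarrow> u \<le> t / 9 \<Longrightarrow> 4/pi^2 * ln u \<le> odd_sqf_harmonic u"
  shows "odd_sqf_harmonic t \<le> 4/pi^2 * ln t + (1 + 4/pi^2)"
proof -
  define A where "A = 4/pi^2"
  define L where "L = ln t"
  have A0: "A > 0" and L0: "L \<ge> 0" using t by (simp_all add: A_def L_def)
  obtain K where K: "K \<ge> 1" "odds_upto (sqrt t) = (\<lambda>k. 2*k+1) ` {..<K}"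
      "2*real K - 1 \<le> sqrt t" "sqrt t < 2*real K + 1"
    using odds_upto_eq_image[of "sqrt t"] t by auto
  define S1 where "S1 = (\<Sum>k\<in>{1..<K}. 1 / (2*real k+1)^2)"
  define S2 where "S2 = (\<Sum>k\<in>{1..<K}. ln (2*real k+1) / (2*real k+1)^2)"
  have "A*L*S1 - 2*A*S2 = (\<Sum>k\<in>{1..<K}. A*(L - 2*ln (2*real k+1)) / (2*real k+1)^2)"
    by (simp add: S1_def S2_def sum_subtractf sum_distrib_left algebra_simps diff_divide_distrib)
  also have "\<dots> \<le> (\<Sum>k\<in>{1..<K}. odd_sqf_harmonic (t / (2*real k+1)^2) / (2*real k+1)^2)"
  proof (rule sum_mono)
    fix k assume k: "k \<in> {1..<K}"
    note b = div_odd_square_bounds[OF t K(3) k]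
    have "A*(L - 2*ln (2*real k+1)) \<le> odd_sqf_harmonic (t / (2*real k+1)^2)"
      using lower[OF b(1,2)] b(3) by (simp add: A_def L_def)
    then show "A*(L - 2*ln (2*real k+1)) / (2*real k+1)^2
        \<le> odd_sqf_harmonic (t / (2*real k+1)^2) / (2*real k+1)^2"
      by (rule divide_right_mono) simp
  qed
  also have "\<dots> = odd_harmonic t - odd_sqf_harmonic t" using odd_harmonic_split[OF t K(1,2)] by simp
  finally have R: "A*L*S1 - 2*A*S2 \<le> odd_harmonic t - odd_sqf_harmonic t" .
  have "{..<K} = insert 0 {1..<K}" using K(1) by auto
  then have "pi^2/8 - 1/(4*K) - 1 \<le> S1"
    using sum_odd_inverse_squares_ge[OF K(1)] by (simp add: S1_def)
  then have m1: "A*L*(pi^2/8 - 1/(4*K) - 1) \<le> A*L*S1" using A0 L0 by (intro mult_left_mono) auto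
  have m2: "2*A*S2 \<le> 2*A*(1/2 - ln_over_sq_tail (2*real K - 1))"
    using sum_ln_over_odd_squares_le[OF K(1)] A0 by (simp add: S2_def)
  have "L \<le> 2 * ln (2*real K+1)"
  proof -
    have "t = (sqrt t)^2" using t by simp
    also have "\<dots> \<le> (2*real K+1)^2" using K(4) t by (intro power_mono) auto
    finally show ?thesis using t by (simp add: L_def ln_realpow flip: ln_le_cancel_iff)
  qed
  then have "L/(4*real K) \<le> ln (2*real K+1) / (2*real K)" using K(1) by (simp add: field_simps)
  also have "\<dots> \<le> 2 * ln_over_sq_tail (2*real K - 1)" by (rule ln_succ_odd_over_le[OF K(1)])
  finally have m3: "A*(L/(4*K)) \<le> A*(2 * ln_over_sq_tail (2*real K - 1))"
    using A0 by (intro mult_left_mono) auto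
  have "A * (pi^2/8) = 1/2" by (simp add: A_def)
  then have "A*L*(pi^2/8 - 1/(4*K) - 1) = L/2 - A*L - A*(L/(4*K))" by (simp add: algebra_simps)
  moreover have "A*(2 * ln_over_sq_tail (2*real K - 1)) + 2*A*(1/2 - ln_over_sq_tail (2*real K - 1)) = A"
    by (simp add: algebra_simps)
  ultimately show ?thesis
    using R m1 m2 m3 odd_harmonic_bounds(2)[OF t] unfolding A_def[symmetric] L_def[symmetric]
    by linarith
qed

lemma odd_sqf_harmonic_lower_step:
  assumes t: "t \<ge> 1"
    and upper: "\<And>u. 1 \<le> u \<Longrightarrow> u \<le> t / 9 \<Longrightarrow> odd_sqf_harmonic u \<le> 4/pi^2 * ln u + (1 + 4/pi^2)"
  shows "4/pi^2 * ln t \<le> odd_sqf_harmonic t"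
proof -
  define A where "A = 4/pi^2"
  define C where "C = 1 + A"
  define L where "L = ln t"
  have A0: "A > 0" and L0: "L \<ge> 0" using t by (simp_all add: A_def L_def)
  obtain K where K: "K \<ge> 1" "odds_upto (sqrt t) = (\<lambda>k. 2*k+1) ` {..<K}"
      "2*real K - 1 \<le> sqrt t" "sqrt t < 2*real K + 1"
    using odds_upto_eq_image[of "sqrt t"] t by auto
  define S1 where "S1 = (\<Sum>k\<in>{1..<K}. 1 / (2*real k+1)^2)"
  define S2 where "S2 = (\<Sum>k\<in>{1..<K}. ln (2*real k+1) / (2*real k+1)^2)"
  have "odd_harmonic t - odd_sqf_harmonic t
      = (\<Sum>k\<in>{1..<K}. odd_sqf_harmonic (t / (2*real k+1)^2) / (2*real k+1)^2)"
    using odd_harmonic_split[OF t K(1,2)] by simp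
  also have "\<dots> \<le> (\<Sum>k\<in>{1..<K}. (A*(L - 2*ln (2*real k+1)) + C) / (2*real k+1)^2)"
  proof (rule sum_mono)
    fix k assume k: "k \<in> {1..<K}"
    note b = div_odd_square_bounds[OF t K(3) k]
    have "odd_sqf_harmonic (t / (2*real k+1)^2) \<le> A*(L - 2*ln (2*real k+1)) + C"
      using upper[OF b(1,2)] b(3) by (simp add: A_def C_def L_def)
    then show "odd_sqf_harmonic (t / (2*real k+1)^2) / (2*real k+1)^2
        \<le> (A*(L - 2*ln (2*real k+1)) + C) / (2*real k+1)^2"
      by (rule divide_right_mono) simp
  qed
  also have "\<dots> = (A*L + C)*S1 - 2*A*S2"
    by (simp add: S1_def S2_def sum_subtractf sum_distrib_left algebra_simps add_divide_distrib
        diff_divide_distrib)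
  finally have R: "odd_harmonic t - odd_sqf_harmonic t \<le> (A*L + C)*S1 - 2*A*S2" .
  have "{..<K} = insert 0 {1..<K}" using K(1) by auto
  then have "S1 \<le> pi^2/8 - 1" using sum_odd_inverse_squares_le[of K] by (simp add: S1_def)
  then have m1: "(A*L + C)*S1 \<le> (A*L + C)*(pi^2/8 - 1)"
    using A0 L0 by (intro mult_left_mono) (auto simp: C_def)
  have m2: "0 \<le> 2*A*S2" using A0 unfolding S2_def by (intro mult_nonneg_nonneg sum_nonneg) auto
  have "A * (pi^2/8) = 1/2" by (simp add: A_def)
  then have e: "(A*L + C)*(pi^2/8 - 1) = L/2 - A*L + C*(pi^2/8 - 1)" by (simp add: algebra_simps)
  have "C*(pi^2/8 - 1) = pi^2/8 - 1/2 - A" by (simp add: A_def C_def field_simps)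
  also have "\<dots> \<le> 2/5" using pi_sq_bounds inverse_pi_sq_bounds by (simp add: A_def)
  finally show ?thesis
    using R m1 m2 e odd_harmonic_bounds(1)[OF t] unfolding A_def[symmetric] L_def[symmetric]
    by linarith
qed

lemma odd_sqf_harmonic_bounds:
  assumes "t \<ge> 1"
  shows "4/pi^2 * ln t \<le> odd_sqf_harmonic t" "odd_sqf_harmonic t \<le> 4/pi^2 * ln t + (1 + 4/pi^2)"
proof -
  have "4/pi^2 * ln t \<le> odd_sqf_harmonic t \<and> odd_sqf_harmonic t \<le> 4/pi^2 * ln t + (1 + 4/pi^2)"
    using assms
  proof (induction t rule: halving_induct)
    case (step t)
    have "u \<le> t/2" if "u \<le> t/9" for u using that step.hyps by linarith
    then show ?case
      using odd_sqf_harmonic_upper_step[OF step.hyps] odd_sqf_harmonic_lower_step[OF step.hyps]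
        step.IH by blast
  qed
  then show "4/pi^2 * ln t \<le> odd_sqf_harmonic t" "odd_sqf_harmonic t \<le> 4/pi^2 * ln t + (1 + 4/pi^2)"
    by simp_all
qed

definition odd_sqfd_sum :: "real \<Rightarrow> real" where
  "odd_sqfd_sum y = (\<Sum>m\<in>odds_upto y. real (sqf_divisor_count m) / real m)"

text \<open>Writing \<open>m = e f\<close> with \<open>e\<close> the squarefree divisor being counted.\<close>
lemma odd_sqfd_sum_eq: "odd_sqfd_sum y = (\<Sum>f\<in>odds_upto y. odd_sqf_harmonic (y / real f) / real f)"
proof -
  define E where "E m = {e. e dvd m \<and> squarefree e}" for m :: nat
  define Q where "Q f = odd_sqfs_upto (y / real f)" for f :: nat
  have finE: "finite (E m)" if "m \<in> odds_upto y" for m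
  proof (rule finite_subset)
    show "E m \<subseteq> {..m}" using that by (auto simp: E_def odds_upto_def dvd_imp_le odd_pos)
  qed simp
  have "odd_sqfd_sum y = (\<Sum>m\<in>odds_upto y. \<Sum>e\<in>E m. 1 / real m)"
    unfolding odd_sqfd_sum_def sqf_divisor_count_def E_def by simp
  also have "\<dots> = (\<Sum>(m, e)\<in>Sigma (odds_upto y) E. 1 / real m)"
    using finE by (intro sum.Sigma) auto
  also have "\<dots> = (\<Sum>(f, e)\<in>Sigma (odds_upto y) Q. 1 / (real e * real f))"
  proof (rule sum.reindex_bij_witness[where i = "\<lambda>(f, e). (f * e, e)" and j = "\<lambda>(m, e). (m div e, e)"])
    fix a assume "a \<in> Sigma (odds_upto y) E"
    then obtain m e where a: "a = (m, e)" and m: "odd m" "real m \<le> y"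
      and e: "e dvd m" "squarefree e"
      by (auto simp: odds_upto_def E_def)
    obtain f where f: "m = e * f" using e(1) by blast
    have "m > 0" using m(1) by (simp add: odd_pos)
    then have e0: "e > 0" and f0: "f > 0" using f by simp_all
    then have fdiv: "m div e = f" using f by simp
    have odd: "odd e" "odd f" using m(1) f by simp_all
    show "(\<lambda>(f, e). (f * e, e)) ((\<lambda>(m, e). (m div e, e)) a) = a" using a f fdiv by simp
    have "real e * real f \<le> y" using m(2) f by (metis of_nat_mult)
    then have "real e \<le> y / real f" using f0 by (simp add: pos_le_divide_eq)
    moreover have "real f \<le> y"
    proof -
      have "f \<le> m" using f e0 by simp
      then show ?thesis using m(2) by linarith
    qed
    ultimately show "(\<lambda>(m, e). (m div e, e)) a \<in> Sigma (odds_upto y) Q"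
      using a fdiv odd e(2) by (simp add: odds_upto_def Q_def odd_sqfs_upto_def)
    show "(\<lambda>(f, e). 1 / (real e * real f)) ((\<lambda>(m, e). (m div e, e)) a) = (\<lambda>(m, e). 1 / real m) a"
      using a f fdiv by simp
  next
    fix b assume "b \<in> Sigma (odds_upto y) Q"
    then obtain f e where b: "b = (f, e)" and f: "odd f" "real f \<le> y"
      and e: "odd e" "squarefree e" "real e \<le> y / real f"
      by (auto simp: odds_upto_def Q_def odd_sqfs_upto_def)
    have f0: "real f > 0" using f(1) by (simp add: odd_pos)
    have "real (f * e) \<le> y" using e(3) f0 by (simp add: pos_le_divide_eq mult.commute)
    then show "(\<lambda>(f, e). (f * e, e)) b \<in> Sigma (odds_upto y) E"
      using b f(1) e(1,2) by (simp add: odds_upto_def E_def)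
    have "e > 0" using e(1) by (simp add: odd_pos)
    then show "(\<lambda>(m, e). (m div e, e)) ((\<lambda>(f, e). (f * e, e)) b) = b" using b by simp
  qed
  also have "\<dots> = (\<Sum>f\<in>odds_upto y. \<Sum>e\<in>Q f. 1 / (real e * real f))"
    by (subst sum.Sigma) (auto simp: Q_def)
  also have "\<dots> = (\<Sum>f\<in>odds_upto y. odd_sqf_harmonic (y / real f) / real f)"
    unfolding odd_sqf_harmonic_def Q_def by (simp add: sum_divide_distrib)
  finally show ?thesis .
qed

lemma odd_sqfd_sum_le:
  assumes y: "y \<ge> 1"
  shows "odd_sqfd_sum y \<le> 1/pi^2 * (ln y)^2 + (1/2 + 6/pi^2) * ln y + (1 + 136/25 * (1/pi^2))"
proof -
  define A where "A = 4/pi^2"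
  define C where "C = 1 + A"
  define L where "L = ln y"
  have A0: "A > 0" and L0: "L \<ge> 0" using y by (simp_all add: A_def L_def)
  have "odd_sqfd_sum y = (\<Sum>f\<in>odds_upto y. odd_sqf_harmonic (y / real f) / real f)"
    by (rule odd_sqfd_sum_eq)
  also have "\<dots> \<le> (\<Sum>f\<in>odds_upto y. (A*L + C) * (1 / real f) - A * (ln (real f) / real f))"
  proof (rule sum_mono)
    fix f assume "f \<in> odds_upto y"
    then have f1: "real f \<ge> 1" and fy: "real f \<le> y" by (auto simp: odds_upto_def odd_pos Suc_le_eq)
    then have "odd_sqf_harmonic (y / real f) \<le> A * (L - ln (real f)) + C"
      using odd_sqf_harmonic_bounds(2)[of "y / real f"] y by (simp add: A_def C_def L_def ln_div)
    then have "odd_sqf_harmonic (y / real f) / real f \<le> (A * (L - ln (real f)) + C) / real f"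
      by (rule divide_right_mono) simp
    also have "\<dots> = (A*L + C) * (1 / real f) - A * (ln (real f) / real f)"
      using f1 by (simp add: field_simps)
    finally show "odd_sqf_harmonic (y / real f) / real f \<le> \<dots>" .
  qed
  also have "\<dots> = (A*L + C) * odd_harmonic y - A * (\<Sum>f\<in>odds_upto y. ln (real f) / real f)"
    by (simp add: odd_harmonic_def sum_subtractf sum_distrib_left)
  also have "\<dots> \<le> (A*L + C) * (L/2 + 1) - A * ((L^2 - 36/25)/4)"
    using odd_harmonic_bounds(2)[OF y] sum_ln_over_odds_upto_ge[OF y] A0 L0
    by (intro diff_mono mult_left_mono) (auto simp: C_def L_def)
  also have "\<dots> = 1/pi^2 * L^2 + (1/2 + 6/pi^2) * L + (1 + 136/25 * (1/pi^2))"
    by (simp add: A_def C_def field_simps power2_eq_square)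
  finally show ?thesis by (simp add: L_def)
qed

lemma odd_sqfd_sum_eq_0: "y < 1 \<Longrightarrow> odd_sqfd_sum y = 0"
  by (simp add: odd_sqfd_sum_def odds_upto_empty)

lemma odd_sqfd_sum_nonneg: "odd_sqfd_sum y \<ge> 0"
  unfolding odd_sqfd_sum_def by (intro sum_nonneg) simp

lemma odd_sqfd_sum_mono: "y \<le> z \<Longrightarrow> odd_sqfd_sum y \<le> odd_sqfd_sum z"
  unfolding odd_sqfd_sum_def by (intro sum_mono2 odds_upto_mono) auto

section \<open>Reduction of the sums of \<open>\<rho>\<close>\<close>

definition pos_upto :: "real \<Rightarrow> nat set" where
  "pos_upto y = {d. 0 < d \<and> real d \<le> y}"

definition rho_pow4_sum :: "nat \<Rightarrow> real \<Rightarrow> real" where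
  "rho_pow4_sum s y = (\<Sum>d\<in>pos_upto y. real (rho (4^s) d) / real d)"

definition odd_part_sqfd_sum :: "real \<Rightarrow> real" where
  "odd_part_sqfd_sum y = (\<Sum>j\<in>pos_upto y. real (sqf_divisor_count (odd_part j)) / real j)"

lemma finite_pos_upto [simp]: "finite (pos_upto y)"
  by (rule finite_subset[of _ "{..nat \<lfloor>y\<rfloor>}"]) (auto simp: pos_upto_def intro: le_nat_floor)

lemma pos_upto_empty: "y < 1 \<Longrightarrow> pos_upto y = {}"
  by (auto simp: pos_upto_def)

lemma pos_upto_nat [simp]: "pos_upto (real N) = {1..N}"
  by (auto simp: pos_upto_def)

lemma sum_pos_upto_split:
  "(\<Sum>d\<in>pos_upto z. g d) = (\<Sum>d\<in>odds_upto z. g d) + (\<Sum>j\<in>pos_upto (z/2). g (2*j))"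
proof -
  have split: "pos_upto z = odds_upto z \<union> (\<lambda>j. 2*j) ` pos_upto (z/2)"
    by (auto simp: pos_upto_def odds_upto_def odd_pos elim!: evenE)
  have "odds_upto z \<inter> (\<lambda>j. 2*j) ` pos_upto (z/2) = {}" by (auto simp: odds_upto_def)
  then have "(\<Sum>d\<in>pos_upto z. g d) = (\<Sum>d\<in>odds_upto z. g d) + (\<Sum>d\<in>(\<lambda>j. 2*j) ` pos_upto (z/2). g d)"
    unfolding split by (intro sum.union_disjoint) auto
  also have "(\<Sum>d\<in>(\<lambda>j. 2*j) ` pos_upto (z/2). g d) = (\<Sum>j\<in>pos_upto (z/2). g (2*j))"
    by (subst sum.reindex) (auto simp: inj_on_def)
  finally show ?thesis .
qed

lemma sum_divide_mult_le:
  fixes a b :: "nat \<Rightarrow> nat" and k :: real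
  assumes "k \<ge> 0" "\<And>j. j \<in> A \<Longrightarrow> real (a j) \<le> c * real (b j)"
  shows "(\<Sum>j\<in>A. real (a j) / (k * real j)) \<le> c / k * (\<Sum>j\<in>A. real (b j) / real j)"
  unfolding sum_distrib_left
proof (rule sum_mono)
  fix j assume "j \<in> A"
  then have "real (a j) / (k * real j) \<le> c * real (b j) / (k * real j)"
    using assms by (intro divide_right_mono) auto
  then show "real (a j) / (k * real j) \<le> c / k * (real (b j) / real j)" by simp
qed

lemma odd_part_sqfd_sum_rec:
  "odd_part_sqfd_sum y = odd_sqfd_sum y + odd_part_sqfd_sum (y/2) / 2"
proof -
  have "odd_part_sqfd_sum y = (\<Sum>d\<in>odds_upto y. real (sqf_divisor_count (odd_part d)) / real d)
      + (\<Sum>j\<in>pos_upto (y/2). real (sqf_divisor_count (odd_part (2*j))) / real (2*j))"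
    unfolding odd_part_sqfd_sum_def by (rule sum_pos_upto_split)
  also have "(\<Sum>d\<in>odds_upto y. real (sqf_divisor_count (odd_part d)) / real d) = odd_sqfd_sum y"
    unfolding odd_sqfd_sum_def by (intro sum.cong) (auto simp: odds_upto_def)
  also have "(\<Sum>j\<in>pos_upto (y/2). real (sqf_divisor_count (odd_part (2*j))) / real (2*j))
      = odd_part_sqfd_sum (y/2) / 2"
    unfolding odd_part_sqfd_sum_def sum_divide_distrib by (intro sum.cong) (auto simp: pos_upto_def)
  finally show ?thesis .
qed

lemma odd_part_sqfd_sum_le: "odd_part_sqfd_sum y \<le> 2 * odd_sqfd_sum y"
proof (cases "y \<ge> 1")
  case True
  then show ?thesis
  proof (induction y rule: halving_induct)
    case (step y)
    have "odd_part_sqfd_sum (y/2) \<le> 2 * odd_sqfd_sum (y/2)"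
    proof (cases "y/2 \<ge> 1")
      case False
      then show ?thesis
        using odd_sqfd_sum_nonneg[of "y/2"] by (simp add: odd_part_sqfd_sum_def pos_upto_empty)
    qed (use step.IH in simp)
    moreover have "odd_sqfd_sum (y/2) \<le> odd_sqfd_sum y" using step.hyps by (intro odd_sqfd_sum_mono) simp
    ultimately show ?case using odd_part_sqfd_sum_rec[of y] by linarith
  qed
next
  case False
  then show ?thesis by (simp add: odd_part_sqfd_sum_def pos_upto_empty odd_sqfd_sum_eq_0)
qed

lemma rho_pow4_sum_Suc_le:
  "rho_pow4_sum (Suc s) y \<le> odd_sqfd_sum y + odd_sqfd_sum (y/2) / 2 + rho_pow4_sum s (y/4) / 2"
proof -
  have "rho_pow4_sum (Suc s) y = (\<Sum>d\<in>odds_upto y. real (rho (4^Suc s) d) / real d)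
      + (\<Sum>j\<in>odds_upto (y/2). real (rho (4^Suc s) (2*j)) / (2 * real j))
      + (\<Sum>i\<in>pos_upto (y/4). real (rho (4^Suc s) (4*i)) / (4 * real i))"
    unfolding rho_pow4_sum_def sum_pos_upto_split[of _ y] sum_pos_upto_split[of _ "y/2"]
    by (simp add: mult.assoc)
  moreover have "(\<Sum>d\<in>odds_upto y. real (rho (4^Suc s) d) / real d) \<le> odd_sqfd_sum y"
    unfolding odd_sqfd_sum_def
    by (intro sum_mono divide_right_mono) (simp_all add: odds_upto_def rho_pow4_odd_le del: power_Suc)
  moreover have "(\<Sum>j\<in>odds_upto (y/2). real (rho (4^Suc s) (2*j)) / (2 * real j)) \<le> 1/2 * odd_sqfd_sum (y/2)"
    unfolding odd_sqfd_sum_def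
    by (rule sum_divide_mult_le) (use rho_pow4_double_odd_le[of _ "Suc s"] in \<open>auto simp: odds_upto_def\<close>)
  moreover have "(\<Sum>i\<in>pos_upto (y/4). real (rho (4^Suc s) (4*i)) / (4 * real i)) \<le> 2/4 * rho_pow4_sum s (y/4)"
    unfolding rho_pow4_sum_def
  proof (rule sum_divide_mult_le)
    fix i assume "i \<in> pos_upto (y/4)"
    then have "rho (4 * 4^s) (4*i) \<le> 2 * rho (4^s) i" by (intro rho_mult_4_le) (simp add: pos_upto_def)
    then have "real (rho (4^Suc s) (4*i)) \<le> real (2 * rho (4^s) i)" by simp
    then show "real (rho (4^Suc s) (4*i)) \<le> 2 * real (rho (4^s) i)" by simp
  qed simp
  ultimately show ?thesis by linarith
qed

lemma rho_pow4_sum_0_le: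
  "rho_pow4_sum 0 y \<le> odd_sqfd_sum y + odd_sqfd_sum (y/2) / 2 + odd_sqfd_sum (y/4) / 2 + odd_sqfd_sum (y/8)"
proof -
  have "rho_pow4_sum 0 y = (\<Sum>d\<in>odds_upto y. real (rho 1 d) / real d)
      + (\<Sum>j\<in>odds_upto (y/2). real (rho 1 (2*j)) / (2 * real j))
      + (\<Sum>i\<in>odds_upto (y/4). real (rho 1 (4*i)) / (4 * real i))
      + (\<Sum>j\<in>pos_upto (y/8). real (rho 1 (8*j)) / (8 * real j))"
    unfolding rho_pow4_sum_def sum_pos_upto_split[of _ y] sum_pos_upto_split[of _ "y/2"]
      sum_pos_upto_split[of _ "y/2/2"]
    by (simp add: mult.assoc)
  moreover have "(\<Sum>d\<in>odds_upto y. real (rho 1 d) / real d) \<le> odd_sqfd_sum y"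
    unfolding odd_sqfd_sum_def using rho_pow4_odd_le[of _ 0]
    by (intro sum_mono divide_right_mono) (auto simp: odds_upto_def)
  moreover have "(\<Sum>j\<in>odds_upto (y/2). real (rho 1 (2*j)) / (2 * real j)) \<le> 1/2 * odd_sqfd_sum (y/2)"
    unfolding odd_sqfd_sum_def
    by (rule sum_divide_mult_le) (use rho_pow4_double_odd_le[of _ 0] in \<open>auto simp: odds_upto_def\<close>)
  moreover have "(\<Sum>i\<in>odds_upto (y/4). real (rho 1 (4*i)) / (4 * real i)) \<le> 2/4 * odd_sqfd_sum (y/4)"
    unfolding odd_sqfd_sum_def
  proof (rule sum_divide_mult_le)
    fix i assume "i \<in> odds_upto (y/4)"
    then have "rho 1 (4*i) \<le> 2 * sqf_divisor_count i" by (intro rho_1_4_odd_le) (simp add: odds_upto_def)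
    then have "real (rho 1 (4*i)) \<le> real (2 * sqf_divisor_count i)" by simp
    then show "real (rho 1 (4*i)) \<le> 2 * real (sqf_divisor_count i)" by simp
  qed simp
  moreover have "(\<Sum>j\<in>pos_upto (y/8). real (rho 1 (8*j)) / (8 * real j)) \<le> 4/8 * odd_part_sqfd_sum (y/8)"
    unfolding odd_part_sqfd_sum_def
  proof (rule sum_divide_mult_le)
    fix j assume "j \<in> pos_upto (y/8)"
    then have "rho 1 (2^3 * j) \<le> 4 * sqf_divisor_count (odd_part j)"
      by (intro rho_1_pow2_mult_le) (simp add: pos_upto_def)
    then have "real (rho 1 (8*j)) \<le> real (4 * sqf_divisor_count (odd_part j))" by simp
    then show "real (rho 1 (8*j)) \<le> 4 * real (sqf_divisor_count (odd_part j))" by simp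
  qed simp
  moreover have "odd_part_sqfd_sum (y/8) \<le> 2 * odd_sqfd_sum (y/8)" by (rule odd_part_sqfd_sum_le)
  ultimately show ?thesis by linarith
qed

section \<open>Numerical estimates\<close>

definition sqfd_bound :: "real \<Rightarrow> real \<Rightarrow> real" where
  "sqfd_bound a M = a*M^2 + (1/2 + 6*a)*M + (1 + 136/25*a)"

definition target_bound :: "real \<Rightarrow> real \<Rightarrow> real" where
  "target_bound a M = 3*a*M^2 + 1387/500*M + 1083/500"

lemma quadratic_pos:
  fixes c0 c1 c2 L :: real
  assumes "0 < c0" "0 \<le> c1" "0 \<le> c2" "0 \<le> L"
  shows "0 < c0 + c1*L + c2*L^2"
  using assms by (simp add: add_pos_nonneg)

lemma mult_ge_of_bounds:
  fixes a g amax gmin :: real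
  assumes "0 \<le> a" "a \<le> amax" "gmin \<le> g" "gmin \<le> 0"
  shows "amax * gmin \<le> a * g"
proof -
  have "amax * gmin \<le> a * gmin" using assms by (intro mult_right_mono_neg) auto
  also have "\<dots> \<le> a * g" using assms by (intro mult_left_mono) auto
  finally show ?thesis .
qed

lemma mult_le_of_bounds:
  fixes a h amax hmax :: real
  assumes "0 \<le> a" "a \<le> amax" "h \<le> hmax" "0 \<le> hmax"
  shows "a * h \<le> amax * hmax"
proof -
  have "a * h \<le> a * hmax" using assms by (intro mult_left_mono) auto
  also have "\<dots> \<le> amax * hmax" using assms by (intro mult_right_mono) auto
  finally show ?thesis .
qed

text \<open>\<open>a\<close> and \<open>l\<close> stand for \<open>1/\<pi>\<^sup>2\<close> and \<open>ln 2\<close>; only these enclosures of them are needed.\<close>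
locale constant_enclosures =
  fixes a l :: real
  assumes a_lower: "1007/10000 \<le> a" and a_upper: "a \<le> 1015/10000"
    and l_lower: "2/3 \<le> l" and l_upper: "l \<le> 25/36"
begin

lemma a_nonneg: "0 \<le> a" using a_lower by simp

lemma l_sq_le: "l^2 \<le> 625/1296"
proof -
  have "l^2 \<le> (25/36)^2" using l_lower l_upper by (intro power_mono) auto
  then show ?thesis by (simp add: power_divide)
qed

lemma sqfd_bound_lt_target: "0 \<le> L \<Longrightarrow> sqfd_bound a L < target_bound a L"
proof -
  assume L: "0 \<le> L"
  have "0 < (583/500 - 136/25*a) + (1137/500 - 6*a)*L + (2*a)*L^2"
    using a_upper a_nonneg L by (intro quadratic_pos) auto
  then show ?thesis unfolding sqfd_bound_def target_bound_def by (simp add: field_simps power2_eq_square)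
qed

lemma sqfd_bound_2_lt_target:
  "l \<le> L \<Longrightarrow> sqfd_bound a L + sqfd_bound a (L-l)/2 < target_bound a L"
proof -
  assume L: "l \<le> L"
  have "1015/10000 * (-6402/1000) \<le> a*(3*l - 1/2*l^2 - 204/25)"
    using l_lower l_sq_le by (intro mult_ge_of_bounds[OF a_nonneg a_upper]) auto
  moreover have "a*(9 - l) \<le> 1015/10000 * (25/3)"
    using l_lower by (intro mult_le_of_bounds[OF a_nonneg a_upper]) auto
  ultimately have "0 < (333/500 + 1/4*l + a*(3*l - 1/2*l^2 - 204/25)) + (253/125 - a*(9 - l))*L
      + (3/2*a)*L^2"
    using a_nonneg L l_lower by (intro quadratic_pos) auto
  then show ?thesis unfolding sqfd_bound_def target_bound_def by (simp add: field_simps power2_eq_square)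
qed

lemma sqfd_bound_3_lt_target:
  "2*l \<le> L \<Longrightarrow> sqfd_bound a L + sqfd_bound a (L-l)/2 + sqfd_bound a (L-2*l)/2 < target_bound a L"
proof -
  assume L: "2*l \<le> L"
  have "1015/10000 * (-6086/1000) \<le> a*(9*l - 5/2*l^2 - 272/25)"
    using l_lower l_sq_le by (intro mult_ge_of_bounds[OF a_nonneg a_upper]) auto
  moreover have "a*(12 - 3*l) \<le> 1015/10000 * 10"
    using l_lower by (intro mult_le_of_bounds[OF a_nonneg a_upper]) auto
  ultimately have "0 < (83/500 + 3/4*l + a*(9*l - 5/2*l^2 - 272/25)) + (887/500 - a*(12 - 3*l))*L
      + a*L^2"
    using a_nonneg L l_lower by (intro quadratic_pos) auto
  then show ?thesis unfolding sqfd_bound_def target_bound_def by (simp add: field_simps power2_eq_square)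
qed

lemma sqfd_bound_4_lt_target:
  "3*l \<le> L \<Longrightarrow> sqfd_bound a L + sqfd_bound a (L-l)/2 + sqfd_bound a (L-2*l)/2 + sqfd_bound a (L-3*l)
    < target_bound a L"
proof -
  assume L: "3*l \<le> L"
  have "1015/10000 * (-387/100) \<le> a*(27*l - 23/2*l^2 - 408/25)"
    using l_lower l_sq_le by (intro mult_ge_of_bounds[OF a_nonneg a_upper]) auto
  moreover have "a*(18 - 9*l) \<le> 1015/10000 * 12"
    using l_lower by (intro mult_le_of_bounds[OF a_nonneg a_upper]) auto
  ultimately have "0 < (-417/500 + 9/4*l + a*(27*l - 23/2*l^2 - 408/25)) + (637/500 - a*(18 - 9*l))*L
      + 0*L^2"
    using a_nonneg L l_lower by (intro quadratic_pos) auto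
  then show ?thesis unfolding sqfd_bound_def target_bound_def by (simp add: field_simps power2_eq_square)
qed

lemma sqfd_bound_2_target_lt_target:
  "2*l \<le> L \<Longrightarrow> sqfd_bound a L + sqfd_bound a (L-l)/2 + target_bound a (L-2*l)/2 < target_bound a L"
proof -
  assume L: "2*l \<le> L"
  have "1015/10000 * (-93/10) \<le> a*(3*l - 13/2*l^2 - 204/25)"
    using l_lower l_sq_le by (intro mult_ge_of_bounds[OF a_nonneg a_upper]) auto
  moreover have "a*(9 - 7*l) \<le> 1015/10000 * (13/3)"
    using l_lower by (intro mult_le_of_bounds[OF a_nonneg a_upper]) auto
  ultimately have "0 < (-417/1000 + 378/125*l + a*(3*l - 13/2*l^2 - 204/25)) + (637/1000 - a*(9 - 7*l))*L
      + 0*L^2"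
    using a_nonneg L l_lower by (intro quadratic_pos) auto
  then show ?thesis unfolding sqfd_bound_def target_bound_def by (simp add: field_simps power2_eq_square)
qed

end

interpretation pi_ln2: constant_enclosures "1/pi^2" "ln 2"
  using inverse_pi_sq_bounds ln2_ge_two_thirds ln2_le_25_over_36 by unfold_locales auto

lemma odd_sqfd_sum_div_pow2_le:
  assumes "2^k \<le> y"
  shows "odd_sqfd_sum (y / 2^k) \<le> sqfd_bound (1/pi^2) (ln y - k * ln 2)"
    and "k * ln 2 \<le> ln y"
    and "ln (y / 2^k) = ln y - k * ln 2"
proof -
  have y: "y > 0" using assms by (metis less_le_trans zero_less_numeral zero_less_power)
  show "ln (y / 2^k) = ln y - k * ln 2" using y by (simp add: ln_div ln_realpow)
  then show "odd_sqfd_sum (y / 2^k) \<le> sqfd_bound (1/pi^2) (ln y - k * ln 2)"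
    using odd_sqfd_sum_le[of "y / 2^k"] assms by (simp add: sqfd_bound_def)
  have "ln (2^k) \<le> ln y" using assms y by simp
  then show "k * ln 2 \<le> ln y" by (simp add: ln_realpow)
qed

lemma rho_pow4_sum_0_lt:
  assumes y: "1 \<le> y"
  shows "rho_pow4_sum 0 y < target_bound (1/pi^2) (ln y)"
proof -
  note V = odd_sqfd_sum_div_pow2_le[where y = y]
  have V0: "odd_sqfd_sum y \<le> sqfd_bound (1/pi^2) (ln y)" using V[of 0] y by simp
  consider "y < 2" | "2 \<le> y" "y < 4" | "4 \<le> y" "y < 8" | "8 \<le> y" by linarith
  then show ?thesis
  proof cases
    case 1
    then show ?thesis using rho_pow4_sum_0_le[of y] V0 pi_ln2.sqfd_bound_lt_target[of "ln y"] y
      by (simp add: odd_sqfd_sum_eq_0)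
  next
    case 2
    then show ?thesis using rho_pow4_sum_0_le[of y] V0 V[of 1] pi_ln2.sqfd_bound_2_lt_target[of "ln y"]
      by (simp add: odd_sqfd_sum_eq_0)
  next
    case 3
    then show ?thesis
      using rho_pow4_sum_0_le[of y] V0 V[of 1] V[of 2] pi_ln2.sqfd_bound_3_lt_target[of "ln y"]
      by (simp add: odd_sqfd_sum_eq_0)
  next
    case 4
    then show ?thesis
      using rho_pow4_sum_0_le[of y] V0 V[of 1] V[of 2] V[of 3] pi_ln2.sqfd_bound_4_lt_target[of "ln y"]
      by simp
  qed
qed

lemma rho_pow4_sum_lt:
  assumes "1 \<le> y"
  shows "rho_pow4_sum s y < target_bound (1/pi^2) (ln y)"
  using assms
proof (induction s arbitrary: y)
  case 0
  then show ?case by (rule rho_pow4_sum_0_lt)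
next
  case (Suc s)
  note V = odd_sqfd_sum_div_pow2_le[where y = y]
  have V0: "odd_sqfd_sum y \<le> sqfd_bound (1/pi^2) (ln y)" using V[of 0] Suc.prems by simp
  consider "y < 2" | "2 \<le> y" "y < 4" | "4 \<le> y" by linarith
  then show ?case
  proof cases
    case 1
    then show ?thesis using rho_pow4_sum_Suc_le[of s y] V0 pi_ln2.sqfd_bound_lt_target[of "ln y"] Suc.prems
      by (simp add: odd_sqfd_sum_eq_0 rho_pow4_sum_def pos_upto_empty)
  next
    case 2
    then show ?thesis
      using rho_pow4_sum_Suc_le[of s y] V0 V[of 1] pi_ln2.sqfd_bound_2_lt_target[of "ln y"]
      by (simp add: rho_pow4_sum_def pos_upto_empty)
  next
    case 3
    have "ln (y/4) = ln y - 2 * ln 2" using V(3)[of 2] 3 by simp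
    then have "rho_pow4_sum s (y/4) < target_bound (1/pi^2) (ln y - 2 * ln 2)"
      using Suc.IH[of "y/4"] 3 by simp
    then show ?thesis
      using 3 rho_pow4_sum_Suc_le[of s y] V0 V[of 1] V[of 2] pi_ln2.sqfd_bound_2_target_lt_target[of "ln y"]
      by simp
  qed
qed

section \<open>Divisors of \<open>n\<^sup>2 - 1\<close>\<close>

text \<open>Divisors \<open>d \<ge> n\<close> of \<open>m < n\<^sup>2\<close> are paired with the divisors \<open>m div d < n\<close>.\<close>
lemma tau_le_twice_small_divisors:
  fixes m n :: nat
  assumes m0: "m > 0" and mlt: "m < n * n"
  shows "tau m \<le> 2 * card {d. 0 < d \<and> d < n \<and> d dvd m}"
proof -
  define Sm where "Sm = {d. 0 < d \<and> d < n \<and> d dvd m}"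
  define Bg where "Bg = {d. n \<le> d \<and> d dvd m}"
  have finS: "finite Sm" by (simp add: Sm_def)
  have finB: "finite Bg" by (rule finite_subset[of _ "{..m}"]) (auto simp: Bg_def m0 dvd_imp_le)
  have "{d. d dvd m} \<subseteq> Sm \<union> Bg" using m0 by (auto simp: Sm_def Bg_def intro: Nat.gr0I)
  then have "card {d. d dvd m} \<le> card Sm + card Bg"
    using finS finB card_Un_le[of Sm Bg] by (meson card_mono finite_UnI le_trans)
  moreover have "card Bg \<le> card Sm"
  proof (rule card_inj_on_le[of "\<lambda>d. m div d"])
    show "inj_on (\<lambda>d. m div d) Bg"
    proof (rule inj_onI)
      fix x y assume xy: "x \<in> Bg" "y \<in> Bg" "m div x = m div y"
      have "m div x * x = m" "m div y * y = m" using xy(1,2) by (simp_all add: Bg_def)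
      then have "m div x * x = m div x * y" using xy(3) by simp
      moreover have "m div x \<noteq> 0" using xy(1) m0 by (auto simp: Bg_def elim!: dvdE)
      ultimately show "x = y" by simp
    qed
    show "(\<lambda>d. m div d) ` Bg \<subseteq> Sm"
    proof
      fix e assume "e \<in> (\<lambda>d. m div d) ` Bg"
      then obtain d where "n \<le> d" "d dvd m" and e: "e = m div d" by (auto simp: Bg_def)
      then obtain q where d: "n \<le> d" "m = d * q" by blast
      have "d > 0" "q > 0" using d m0 by auto
      then have "e = q" using d e by simp
      moreover have "q < n"
      proof (rule ccontr)
        assume "\<not> q < n"
        then have "n * n \<le> d * q" using d by (intro mult_le_mono) auto
        then show False using d mlt by simp
      qed
      ultimately show "e \<in> Sm" using d \<open>q > 0\<close> by (simp add: Sm_def)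
    qed
  qed (rule finS)
  ultimately show ?thesis using m0 by (simp add: tau_def Sm_def)
qed

lemma card_sq_roots_of_1_upto:
  fixes d N :: nat
  assumes d0: "0 < d"
  shows "card {n \<in> {1..N}. d < n \<and> d dvd n^2 - 1} \<le> rho 1 d * (N div d)"
proof -
  define S where "S = {x. x < d \<and> x^2 mod d = 1 mod d}"
  define T where "T = {n \<in> {1..N}. d < n \<and> d dvd n^2 - 1}"
  have "(\<lambda>n. (n mod d, n div d)) ` T \<subseteq> S \<times> {1..N div d}"
  proof
    fix z assume "z \<in> (\<lambda>n. (n mod d, n div d)) ` T"
    then obtain n where z: "z = (n mod d, n div d)" and n: "1 \<le> n" "n \<le> N" "d < n" "d dvd n^2 - 1"
      by (auto simp: T_def)
    have "n^2 mod d = ((n^2 - 1) + 1) mod d" using n(1) by simp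
    also have "\<dots> = ((n^2 - 1) mod d + 1) mod d" by (simp only: mod_add_left_eq)
    also have "\<dots> = 1 mod d" using n(4) by simp
    finally have "(n mod d)^2 mod d = 1 mod d" by (simp add: power_mod)
    moreover have "1 \<le> n div d" using n(3) d0 by (simp add: div_greater_zero_iff Suc_le_eq)
    moreover have "n div d \<le> N div d" using n(2) by (rule div_le_mono)
    ultimately show "z \<in> S \<times> {1..N div d}" using z d0 by (simp add: S_def)
  qed
  moreover have "inj_on (\<lambda>n. (n mod d, n div d)) T"
    by (rule inj_onI) (metis div_mult_mod_eq prod.inject)
  ultimately have "card T \<le> card (S \<times> {1..N div d})"
    by (intro card_inj_on_le) (auto simp: S_def)
  also have "\<dots> = rho 1 d * (N div d)" by (simp add: card_cartesian_product S_def rho_def)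
  finally show ?thesis by (simp add: T_def)
qed

lemma sum_tau_sq_minus_one_le:
  fixes N :: nat
  shows "(\<Sum>n=1..N. tau (n^2 - 1)) \<le> 2 * (\<Sum>d=1..N. rho 1 d * (N div d))"
proof -
  define R where "R n d \<longleftrightarrow> d < n \<and> d dvd n^2 - 1" for n d :: nat
  have "tau (n^2 - 1) \<le> 2 * card {d \<in> {1..N}. R n d}" if n: "n \<in> {1..N}" for n
  proof (cases "n = 1")
    case False
    then have "2 * 2 \<le> n * n" using n by (intro mult_le_mono) auto
    then have "0 < n^2 - 1" "n^2 - 1 < n * n" by (auto simp: power2_eq_square)
    moreover have "{d. 0 < d \<and> d < n \<and> d dvd n^2 - 1} = {d \<in> {1..N}. R n d}" using n by (auto simp: R_def)
    ultimately show ?thesis using tau_le_twice_small_divisors by metis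
  qed (simp add: tau_def)
  then have "(\<Sum>n=1..N. tau (n^2 - 1)) \<le> (\<Sum>n=1..N. 2 * card {d \<in> {1..N}. R n d})"
    by (intro sum_mono) blast
  also have "\<dots> = 2 * (\<Sum>n=1..N. \<Sum>d\<in>{d \<in> {1..N}. R n d}. 1)" by (simp add: sum_distrib_left)
  also have "(\<Sum>n=1..N. \<Sum>d\<in>{d \<in> {1..N}. R n d}. 1) = (\<Sum>d=1..N. \<Sum>n\<in>{n \<in> {1..N}. R n d}. (1::nat))"
    by (rule sum.swap_restrict) auto
  also have "\<dots> \<le> (\<Sum>d=1..N. rho 1 d * (N div d))"
    by (intro sum_mono) (use card_sq_roots_of_1_upto in \<open>auto simp: R_def\<close>)
  finally show ?thesis by simp
qed

theorem corollary4:
  fixes N :: nat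
  assumes "N \<ge> 1"
  shows "(\<forall>s::nat. (\<Sum>l=1..N. real (rho (4 ^ s) l) / real l)
            < 3 / pi^2 * (ln (real N))^2 + 2.774 * ln (real N) + 2.166)
       \<and> (\<Sum>n=1..N. real (tau (n^2 - 1)))
            < real N * (6 / pi^2 * (ln (real N))^2 + 5.548 * ln (real N) + 4.332)"
proof -
  have target: "target_bound (1/pi^2) (ln (real N)) = 3 / pi^2 * (ln (real N))^2 + 2.774 * ln (real N) + 2.166"
    by (simp add: target_bound_def)
  have rho_sum: "(\<Sum>l=1..N. real (rho (4 ^ s) l) / real l) < target_bound (1/pi^2) (ln (real N))" for s
    using rho_pow4_sum_lt[of "real N" s] assms by (simp add: rho_pow4_sum_def)
  have "(\<Sum>n=1..N. real (tau (n^2 - 1))) \<le> 2 * (\<Sum>d=1..N. real (rho 1 d) * real (N div d))"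
    using sum_tau_sq_minus_one_le[of N] by (simp flip: of_nat_sum of_nat_mult)
  also have "\<dots> \<le> 2 * (\<Sum>d=1..N. real (rho 1 d) * (real N / real d))"
    by (intro mult_left_mono sum_mono) (auto intro: of_nat_div_le_of_nat)
  also have "\<dots> = 2 * real N * (\<Sum>l=1..N. real (rho (4 ^ 0) l) / real l)"
    by (simp add: sum_distrib_left mult_ac)
  also have "\<dots> < 2 * real N * target_bound (1/pi^2) (ln (real N))"
    using rho_sum[of 0] assms by simp
  finally show ?thesis using rho_sum unfolding target by (simp add: algebra_simps)
qed

end
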